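(* Let $\mathcal{X} \subset \mathbb{R}^d$ be compact and convex, let $\|\cdot\|$ be a norm on $\mathbb{R}^d$, let $\mu>0$, let $\beta: \mathcal{X} \to \mathbb{R}_{> 0}$ be continuous, and let $f: \mathcal{X} \to \mathbb{R}$ be upper semi-continuous. Let $\mathcal{S}_{\mu, \beta}(f)$ be the set of probability densities (measures) $\pi$ supported in $\mathcal{X}$ such that $\pi$ is $\mu$-strongly logconcave with respect to $\|\cdot\|$, the renormalized measure $\pi' \propto \beta \pi$ is also $\mu$-strongly logconcave with respect to $\|\cdot\|$, and $\int_{\mathcal{X}} f\, d\pi \geq 0$. Then every extreme point $\pi$ of $\mathrm{conv}(\mathcal{S}_{\mu, \beta}(f))$ satisfies one of the following: (i) $\pi$ is a Dirac measure at some $x \in \mathcal{X}$ with $f(x) \ge 0$; or (ii) $\pi$ is supported on a line segment $[a, b] \subset \mathcal{X}$.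
   Context: A function $h$ is $\mu$-strongly convex in $\|\cdot\|$ if $h(tx+(1-t)y)\le th(x)+(1-t)h(y)-\frac{\mu t(1-t)}{2}\|x-y\|^2$ for all $x,y$ in its domain and $t\in[0,1]$. A measure $\pi$ on $\mathbb{R}^d$ is $\mu$-strongly logconcave with respect to $\|\cdot\|$ if, letting $E$ be the least affine subspace containing the support of $\pi$ and $m_E$ the Lebesgue measure on $E$, we have $d\pi=g\,dm_E$ where $g$ is nonnegative and locally integrable and $-\log g: E\to\mathbb{R}\cup\{+\infty\}$ is $\mu$-strongly convex in $\|\cdot\|$. For $a,b\in\mathbb{R}^d$, $[a,b]$ denotes the line segment between them. *)

theory Defs
  imports "HOL-Analysis.Analysis" "HOL-Probability.Probability"
begin

definition is_norm :: "('a::real_vector \<Rightarrow> real) \<Rightarrow> bool" where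
  "is_norm N \<longleftrightarrow> (\<forall>x. N x \<ge> 0) \<and> (\<forall>x. N x = 0 \<longleftrightarrow> x = 0)
     \<and> (\<forall>c x. N (c *\<^sub>R x) = \<bar>c\<bar> * N x) \<and> (\<forall>x y. N (x + y) \<le> N x + N y)"

definition usc_on :: "'a::metric_space set \<Rightarrow> ('a \<Rightarrow> real) \<Rightarrow> bool" where
  "usc_on X f \<longleftrightarrow> (\<forall>x\<in>X. \<forall>e>0. \<exists>d>0. \<forall>y\<in>X. dist y x < d \<longrightarrow> f y < f x + e)"

text \<open>mu-strong convexity in the norm N of an extended-real-valued function on E
  (values in R \<union> {+\<infinity>}; ereal arithmetic with 0 * \<infinity> = 0).\<close>
definition strongly_convex_on ::
  "'a::real_vector set \<Rightarrow> real \<Rightarrow> ('a \<Rightarrow> real) \<Rightarrow> ('a \<Rightarrow> ereal) \<Rightarrow> bool" where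
  "strongly_convex_on E \<mu> N h \<longleftrightarrow>
     (\<forall>x\<in>E. \<forall>y\<in>E. \<forall>t\<in>{0..1}.
        h (t *\<^sub>R x + (1 - t) *\<^sub>R y)
          \<le> ereal t * h x + ereal (1 - t) * h y - ereal (\<mu> * t * (1 - t) / 2 * (N (x - y))\<^sup>2))"

definition neglog :: "('a \<Rightarrow> real) \<Rightarrow> 'a \<Rightarrow> ereal" where
  "neglog g x = (if g x > 0 then ereal (- ln (g x)) else \<infinity>)"

definition msupport :: "'a::metric_space measure \<Rightarrow> 'a set" where
  "msupport M = {x. \<forall>e>0. emeasure M (ball x e) > 0}"

text \<open>Lebesgue measure on a (nonempty) affine subspace E: pushforward of Lebesgue measure
  on R^k, k = dim, under an affine isometric parametrisation
  t \<mapsto> x0 + sum_{b in B} t_b b, with B an orthonormal basis of the direction space of E.\<close>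
definition lebesgue_on_affine :: "'a::euclidean_space set \<Rightarrow> 'a measure" where
  "lebesgue_on_affine E =
    (let x0 = (SOME x. x \<in> E);
         V = (\<lambda>y. y - x0) ` E;
         B = (SOME B. finite B \<and> pairwise orthogonal B \<and> (\<forall>b\<in>B. norm b = 1) \<and> span B = V)
     in distr (PiM B (\<lambda>_. lborel)) borel (\<lambda>t. x0 + (\<Sum>b\<in>B. t b *\<^sub>R b)))"

definition strongly_logconcave :: "real \<Rightarrow> ('a::euclidean_space \<Rightarrow> real) \<Rightarrow> 'a measure \<Rightarrow> bool" where
  "strongly_logconcave \<mu> N \<pi> \<longleftrightarrow>
    (let E = affine hull (msupport \<pi>); mE = lebesgue_on_affine E in
      \<exists>g :: 'a \<Rightarrow> real. g \<in> borel_measurable borel \<and> (\<forall>x. g x \<ge> 0)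
        \<and> (\<forall>K. compact K \<longrightarrow> (\<integral>\<^sup>+ x. ennreal (g x * indicator K x) \<partial>mE) < \<infinity>)
        \<and> \<pi> = density mE (\<lambda>x. ennreal (g x))
        \<and> strongly_convex_on E \<mu> N (neglog g))"

text \<open>Renormalised measure pi' proportional to beta * pi (beta only matters on X).\<close>
definition renorm :: "'a::euclidean_space set \<Rightarrow> ('a \<Rightarrow> real) \<Rightarrow> 'a measure \<Rightarrow> 'a measure" where
  "renorm X \<beta> \<pi> = (let Z = (\<integral>x. \<beta> x * indicator X x \<partial>\<pi>) in
       density \<pi> (\<lambda>x. ennreal (\<beta> x * indicator X x / Z)))"

text \<open>The set S_{mu,beta}(f). The integral of f (bounded above, possibly -\<infinity>) is >= 0,
  expressed as: integral of f^- \<le> integral of f^+.\<close>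
definition S_set :: "'a::euclidean_space set \<Rightarrow> ('a \<Rightarrow> real) \<Rightarrow> real \<Rightarrow> ('a \<Rightarrow> real)
     \<Rightarrow> ('a \<Rightarrow> real) \<Rightarrow> 'a measure set" where
  "S_set X N \<mu> \<beta> f = {\<pi>. prob_space \<pi> \<and> sets \<pi> = sets borel \<and> emeasure \<pi> (- X) = 0
      \<and> strongly_logconcave \<mu> N \<pi> \<and> strongly_logconcave \<mu> N (renorm X \<beta> \<pi>)
      \<and> (\<integral>\<^sup>+ x. ennreal (- (f x * indicator X x)) \<partial>\<pi>) \<le> (\<integral>\<^sup>+ x. ennreal (f x * indicator X x) \<partial>\<pi>)}"

definition conv_meas :: "'a::topological_space measure set \<Rightarrow> 'a measure set" where
  "conv_meas S = {\<nu>. sets \<nu> = sets borel \<and>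
     (\<exists>(n::nat) c p. (\<forall>i<n. p i \<in> S \<and> c i \<ge> (0::real)) \<and> (\<Sum>i<n. c i) = 1 \<and>
        (\<forall>A\<in>sets borel. emeasure \<nu> A = (\<Sum>i<n. ennreal (c i) * emeasure (p i) A)))}"

definition extreme_meas :: "'a::topological_space measure set \<Rightarrow> 'a measure \<Rightarrow> bool" where
  "extreme_meas C \<nu> \<longleftrightarrow> \<nu> \<in> C \<and>
     (\<forall>\<nu>1\<in>C. \<forall>\<nu>2\<in>C. \<forall>t::real. 0 < t \<and> t < 1 \<and>
        (\<forall>A\<in>sets borel. emeasure \<nu> A = ennreal t * emeasure \<nu>1 A + ennreal (1 - t) * emeasure \<nu>2 A)
        \<longrightarrow> \<nu>1 = \<nu>2)"

end

(*
  An extreme point pi of the convex hull of S lies in S itself. Let m be its barycentre and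
  w = integral of f(x) (x - m) d pi. For every u orthogonal to w with |<u, x - m>| < 1 on X, the
  tilted measures (1 + <u, x - m>) pi and (1 - <u, x - m>) pi are again in S: they are probability
  measures, multiplying a density by a positive affine (hence log-concave) weight preserves
  mu-strong log-concavity of pi and of its beta-renormalisation, and the integral of f changes by
  +-<u, w> = 0. Since pi is the midpoint of the two tilts, extremality makes them equal, so <u, x - m>
  vanishes on the support of pi. Hence the support lies on the line through m in direction w, and
  X meets that line in a segment carrying all of pi.
*)

theory Submission
  imports Defs
begin

lemma msupport_subset:
  fixes \<nu> :: "'a::metric_space measure"
  assumes "sets \<nu> = sets borel" and "closed X" and "emeasure \<nu> (- X) = 0"
  shows "msupport \<nu> \<subseteq> X"
proof
  fix x assume x: "x \<in> msupport \<nu>"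
  show "x \<in> X"
  proof (rule ccontr)
    assume "x \<notin> X"
    then obtain e where "e > 0" "ball x e \<subseteq> - X"
      using \<open>closed X\<close> open_contains_ball[of "- X"] by auto
    then have "emeasure \<nu> (ball x e) \<le> emeasure \<nu> (- X)"
      using assms by (intro emeasure_mono) auto
    with assms x \<open>e > 0\<close> show False unfolding msupport_def by auto
  qed
qed

lemma compl_msupport_null:
  fixes \<nu> :: "'a::{metric_space, second_countable_topology} measure"
  assumes sets: "sets \<nu> = sets borel"
  shows "- msupport \<nu> \<in> null_sets \<nu>"
proof -
  define \<F> where "\<F> = {ball x e | x e. e > 0 \<and> emeasure \<nu> (ball x e) = 0}"
  obtain \<F>' where \<F>': "\<F>' \<subseteq> \<F>" "countable \<F>'" "\<Union>\<F>' = \<Union>\<F>"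
    using Lindelof[of \<F>] unfolding \<F>_def by blast
  have "- msupport \<nu> = \<Union>\<F>"
  proof
    show "- msupport \<nu> \<subseteq> \<Union>\<F>"
    proof
      fix x assume "x \<in> - msupport \<nu>"
      then obtain e where "e > 0" "emeasure \<nu> (ball x e) = 0"
        unfolding msupport_def by (auto simp: not_less)
      then show "x \<in> \<Union>\<F>" unfolding \<F>_def using centre_in_ball by blast
    qed
    show "\<Union>\<F> \<subseteq> - msupport \<nu>"
    proof
      fix y assume "y \<in> \<Union>\<F>"
      then obtain x e where y: "y \<in> ball x e" and null: "emeasure \<nu> (ball x e) = 0"
        unfolding \<F>_def by blast
      define r where "r = e - dist x y"
      have "r > 0" "ball y r \<subseteq> ball x e"
        using y unfolding r_def by (auto simp: subset_eq) metric
      then have "emeasure \<nu> (ball y r) \<le> emeasure \<nu> (ball x e)"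
        using sets by (intro emeasure_mono) auto
      then have "emeasure \<nu> (ball y r) = 0" using null by simp
      with \<open>r > 0\<close> show "y \<in> - msupport \<nu>" unfolding msupport_def by auto
    qed
  qed
  also have "\<dots> = (\<Union>B\<in>\<F>'. B)" using \<F>' by simp
  also have "\<dots> \<in> null_sets \<nu>"
  proof (rule null_sets_UN')
    show "countable \<F>'" by (rule \<F>'(2))
    show "B \<in> null_sets \<nu>" if "B \<in> \<F>'" for B
      using that \<F>'(1) sets by (auto simp: \<F>_def null_sets_def)
  qed
  finally show ?thesis .
qed

lemma msupport_density_subset:
  fixes \<nu> :: "'a::metric_space measure"
  assumes sets: "sets \<nu> = sets borel" and "w \<in> borel_measurable borel"
  shows "msupport (density \<nu> (\<lambda>x. ennreal (w x))) \<subseteq> msupport \<nu>"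
proof
  fix x assume x: "x \<in> msupport (density \<nu> (\<lambda>x. ennreal (w x)))"
  show "x \<in> msupport \<nu>" unfolding msupport_def
  proof (intro CollectI allI impI)
    fix e :: real assume "e > 0"
    show "emeasure \<nu> (ball x e) > 0"
    proof (rule ccontr)
      assume "\<not> emeasure \<nu> (ball x e) > 0"
      then have "ball x e \<in> null_sets \<nu>" using sets by (auto simp: null_sets_def)
      then have "emeasure (density \<nu> (\<lambda>x. ennreal (w x))) (ball x e) = 0"
        using assms by (simp add: emeasure_density measurable_cong_sets[OF sets refl] nn_integral_null_set)
      with x \<open>e > 0\<close> show False unfolding msupport_def by auto
    qed
  qed
qed

lemma msupport_density:
  fixes \<nu> :: "'a::metric_space measure"
  assumes sets: "sets \<nu> = sets borel" and X: "closed X" "emeasure \<nu> (- X) = 0"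
    and w_meas: "w \<in> borel_measurable borel" and w_pos: "\<forall>x\<in>X. isCont w x \<and> w x > 0"
  shows "msupport (density \<nu> (\<lambda>x. ennreal (w x))) = msupport \<nu>"
proof
  show "msupport \<nu> \<subseteq> msupport (density \<nu> (\<lambda>x. ennreal (w x)))"
  proof
    fix x assume x: "x \<in> msupport \<nu>"
    then have "x \<in> X" using msupport_subset[OF sets X] by blast
    show "x \<in> msupport (density \<nu> (\<lambda>x. ennreal (w x)))" unfolding msupport_def
    proof (intro CollectI allI impI)
      fix e :: real assume "e > 0"
      have "isCont w x" "w x > 0" using w_pos \<open>x \<in> X\<close> by auto
      then obtain d where "d > 0" and d: "\<forall>y. dist y x < d \<longrightarrow> dist (w y) (w x) < w x / 2"
        unfolding continuous_at_eps_delta using half_gt_zero by blast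
      define r where "r = min d e"
      have "r > 0" using \<open>d > 0\<close> \<open>e > 0\<close> by (simp add: r_def)
      have w_ball: "w x / 2 \<le> w y" if "y \<in> ball x r" for y
      proof -
        have "dist y x < d" using that by (simp add: r_def dist_commute)
        then have "dist (w y) (w x) < w x / 2" using d by blast
        then show ?thesis unfolding dist_real_def by linarith
      qed
      have "emeasure \<nu> (ball x r) > 0" using x \<open>r > 0\<close> unfolding msupport_def by auto
      then have "0 < ennreal (w x / 2) * emeasure \<nu> (ball x r)"
        using \<open>w x > 0\<close> by (simp add: ennreal_zero_less_mult_iff)
      also have "\<dots> = (\<integral>\<^sup>+ y. ennreal (w x / 2) * indicator (ball x r) y \<partial>\<nu>)"
        using sets by (simp add: nn_integral_cmult_indicator)
      also have "\<dots> \<le> (\<integral>\<^sup>+ y. ennreal (w y) * indicator (ball x r) y \<partial>\<nu>)"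
        using w_ball by (intro nn_integral_mono) (auto simp: indicator_def intro: ennreal_leI)
      also have "\<dots> = emeasure (density \<nu> (\<lambda>x. ennreal (w x))) (ball x r)"
        using w_meas sets by (simp add: emeasure_density measurable_cong_sets[OF sets refl])
      also have "\<dots> \<le> emeasure (density \<nu> (\<lambda>x. ennreal (w x))) (ball x e)"
        using sets by (intro emeasure_mono) (auto simp: r_def)
      finally show "emeasure (density \<nu> (\<lambda>x. ennreal (w x))) (ball x e) > 0" .
    qed
  qed
qed (rule msupport_density_subset[OF sets w_meas])

lemma density_eq_imp_le_on_msupport:
  fixes \<nu> :: "'a::metric_space measure"
  assumes sets: "sets \<nu> = sets borel" and fin: "emeasure \<nu> (space \<nu>) < \<infinity>"
    and p: "p \<in> msupport \<nu>"
    and u_meas: "u1 \<in> borel_measurable borel" "u2 \<in> borel_measurable borel"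
    and cont: "isCont u1 p" "isCont u2 p" and "0 \<le> u2 p"
    and u_eq: "density \<nu> (\<lambda>x. ennreal (u1 x)) = density \<nu> (\<lambda>x. ennreal (u2 x))"
  shows "u1 p \<le> u2 p"
proof (rule ccontr)
  assume "\<not> u1 p \<le> u2 p"
  define q where "q = (u1 p - u2 p) / 3"
  have "q > 0" and gap: "u2 p + q < u1 p - q"
    using \<open>\<not> u1 p \<le> u2 p\<close> by (simp_all add: q_def field_simps)
  obtain e1 where "e1 > 0" and e1: "\<forall>y. dist y p < e1 \<longrightarrow> dist (u1 y) (u1 p) < q"
    using cont(1) \<open>q > 0\<close> unfolding continuous_at_eps_delta by blast
  obtain e2 where "e2 > 0" and e2: "\<forall>y. dist y p < e2 \<longrightarrow> dist (u2 y) (u2 p) < q"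
    using cont(2) \<open>q > 0\<close> unfolding continuous_at_eps_delta by blast
  define B where "B = ball p (min e1 e2)"
  have B_sets: "B \<in> sets \<nu>" using sets by (simp add: B_def)
  have u2_B: "u2 y \<le> u2 p + q" and u1_B: "u1 p - q \<le> u1 y" if "y \<in> B" for y
  proof -
    have "dist y p < e1" "dist y p < e2" using that by (simp_all add: B_def dist_commute)
    then have "dist (u1 y) (u1 p) < q" "dist (u2 y) (u2 p) < q" using e1 e2 by blast+
    then show "u2 y \<le> u2 p + q" "u1 p - q \<le> u1 y" unfolding dist_real_def by linarith+
  qed
  have "emeasure \<nu> B > 0" using p \<open>e1 > 0\<close> \<open>e2 > 0\<close> unfolding msupport_def B_def by auto
  moreover have "emeasure \<nu> B < \<infinity>" using fin emeasure_space[of \<nu> B] by (rule le_less_trans[rotated])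
  ultimately obtain P where P: "emeasure \<nu> B = ennreal P" "P > 0"
    by (metis ennreal_cases ennreal_less_zero_iff infinity_ennreal_def less_irrefl)
  have density_B: "emeasure (density \<nu> (\<lambda>x. ennreal (u x))) B
      = (\<integral>\<^sup>+ y. ennreal (u y) * indicator B y \<partial>\<nu>)" if "u \<in> borel_measurable borel" for u
  proof (rule emeasure_density[OF _ B_sets])
    show "(\<lambda>x. ennreal (u x)) \<in> borel_measurable \<nu>"
      unfolding measurable_cong_sets[OF sets refl] using that by measurable
  qed
  have "emeasure (density \<nu> (\<lambda>x. ennreal (u2 x))) B \<le> (\<integral>\<^sup>+ y. ennreal (u2 p + q) * indicator B y \<partial>\<nu>)"
    unfolding density_B[OF u_meas(2)]
    using u2_B by (intro nn_integral_mono) (auto simp: indicator_def intro: ennreal_leI)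
  also have "\<dots> = ennreal ((u2 p + q) * P)"
    using B_sets P \<open>0 \<le> u2 p\<close> \<open>q > 0\<close> by (simp add: nn_integral_cmult_indicator ennreal_mult)
  also have "\<dots> < ennreal ((u1 p - q) * P)"
    using P gap \<open>0 \<le> u2 p\<close> \<open>q > 0\<close> by (simp add: ennreal_less_iff)
  also have "\<dots> = (\<integral>\<^sup>+ y. ennreal (u1 p - q) * indicator B y \<partial>\<nu>)"
    using B_sets P gap \<open>0 \<le> u2 p\<close> \<open>q > 0\<close> by (simp add: nn_integral_cmult_indicator ennreal_mult)
  also have "\<dots> \<le> emeasure (density \<nu> (\<lambda>x. ennreal (u1 x))) B"
    unfolding density_B[OF u_meas(1)]
    using u1_B by (intro nn_integral_mono) (auto simp: indicator_def intro: ennreal_leI)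
  finally show False using u_eq by simp
qed

lemma density_eq_imp_eq_on_msupport:
  fixes \<nu> :: "'a::metric_space measure"
  assumes "sets \<nu> = sets borel" and "emeasure \<nu> (space \<nu>) < \<infinity>"
    and "p \<in> msupport \<nu>"
    and "w1 \<in> borel_measurable borel" "w2 \<in> borel_measurable borel"
    and "isCont w1 p" "isCont w2 p" "0 \<le> w1 p" "0 \<le> w2 p"
    and "density \<nu> (\<lambda>x. ennreal (w1 x)) = density \<nu> (\<lambda>x. ennreal (w2 x))"
  shows "w1 p = w2 p"
  using density_eq_imp_le_on_msupport[OF assms(1-3)] assms(4-) by (metis antisym)

lemma neglog_ne_minf [simp]: "neglog g x \<noteq> -\<infinity>"
  by (simp add: neglog_def)

lemma neglog_mult:
  assumes "g x \<ge> 0" and "h x \<ge> 0"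
  shows "neglog (\<lambda>x. g x * h x) x = neglog g x + neglog h x"
proof (cases "g x > 0 \<and> h x > 0")
  case True
  then show ?thesis by (simp add: neglog_def ln_mult)
next
  case False
  with assms have "g x * h x = 0" and "neglog g x = \<infinity> \<or> neglog h x = \<infinity>"
    by (auto simp: neglog_def)
  then show ?thesis by (auto simp: neglog_def)
qed

lemma ereal_convex_combination_add:
  fixes a1 a2 b1 b2 :: ereal
  assumes "a1 \<noteq> -\<infinity>" "a2 \<noteq> -\<infinity>" "b1 \<noteq> -\<infinity>" "b2 \<noteq> -\<infinity>" and "0 \<le> s" "0 \<le> t"
  shows "(ereal t * a1 + ereal s * b1 - ereal c1) + (ereal t * a2 + ereal s * b2 - ereal c2)
       = ereal t * (a1 + a2) + ereal s * (b1 + b2) - ereal (c1 + c2)"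
  using assms
  by (cases a1; cases a2; cases b1; cases b2; cases "t = 0"; cases "s = 0")
     (simp_all add: algebra_simps)

lemma strongly_convex_on_add:
  assumes "strongly_convex_on E \<mu> N h1" and "strongly_convex_on E \<nu> N h2"
    and "\<forall>x\<in>E. h1 x \<noteq> -\<infinity> \<and> h2 x \<noteq> -\<infinity>"
  shows "strongly_convex_on E (\<mu> + \<nu>) N (\<lambda>x. h1 x + h2 x)"
  unfolding strongly_convex_on_def
proof (intro ballI)
  fix x y t assume xy: "x \<in> E" "y \<in> E" and t: "t \<in> {0..1::real}"
  define z where "z = t *\<^sub>R x + (1 - t) *\<^sub>R y"
  define q where "q = t * (1 - t) / 2 * (N (x - y))\<^sup>2"
  have "h1 z + h2 z \<le> (ereal t * h1 x + ereal (1 - t) * h1 y - ereal (\<mu> * q))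
      + (ereal t * h2 x + ereal (1 - t) * h2 y - ereal (\<nu> * q))"
    using assms(1,2) xy t unfolding strongly_convex_on_def z_def q_def
    by (intro add_mono) (simp_all add: mult.assoc)
  also have "\<dots> = ereal t * (h1 x + h2 x) + ereal (1 - t) * (h1 y + h2 y) - ereal ((\<mu> + \<nu>) * q)"
    using assms(3) xy t by (subst ereal_convex_combination_add) (auto simp: distrib_right)
  finally show "h1 z + h2 z \<le> ereal t * (h1 x + h2 x) + ereal (1 - t) * (h1 y + h2 y)
      - ereal ((\<mu> + \<nu>) * t * (1 - t) / 2 * (N (x - y))\<^sup>2)"
    by (simp add: q_def mult.assoc)
qed

lemma convex_neglog_affine:
  "strongly_convex_on E 0 N (neglog (\<lambda>x. max 0 (\<alpha> + v \<bullet> x)))"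
  unfolding strongly_convex_on_def
proof (intro ballI)
  fix x y t assume t: "t \<in> {0..1::real}"
  define l where "l z = max 0 (\<alpha> + v \<bullet> z)" for z
  have "neglog l (t *\<^sub>R x + (1 - t) *\<^sub>R y) \<le> ereal t * neglog l x + ereal (1 - t) * neglog l y"
  proof (cases "0 < t \<and> t < 1 \<and> l x > 0 \<and> l y > 0")
    case True
    have pos: "t * l x + (1 - t) * l y > 0"
      using True by (auto intro!: add_pos_pos mult_pos_pos)
    have "l x = \<alpha> + v \<bullet> x" "l y = \<alpha> + v \<bullet> y"
      using True by (auto simp: l_def max_def split: if_splits)
    then have comb: "l (t *\<^sub>R x + (1 - t) *\<^sub>R y) = t * l x + (1 - t) * l y"
      using pos unfolding l_def by (simp add: inner_add_right algebra_simps)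
    have "t * ln (l x) + (1 - t) * ln (l y) \<le> ln (t * l x + (1 - t) * l y)"
      using True ln_concave unfolding concave_on_iff by simp
    then show ?thesis
      using True comb pos by (auto simp: neglog_def)
  next
    case False
    with t consider "t = 0" | "t = 1" | "0 < t" "t < 1" "neglog l x = \<infinity> \<or> neglog l y = \<infinity>"
      by (force simp: neglog_def)
    then show ?thesis
      by cases (auto simp: ereal_mult_infty zero_ereal_def[symmetric])
  qed
  then show "neglog l (t *\<^sub>R x + (1 - t) *\<^sub>R y) \<le> ereal t * neglog l x + ereal (1 - t) * neglog l y
      - ereal (0 * t * (1 - t) / 2 * (N (x - y))\<^sup>2)"
    by simp
qed

lemma sets_lebesgue_on_affine [simp]: "sets (lebesgue_on_affine E) = sets borel"
  unfolding lebesgue_on_affine_def Let_def by simp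

lemma nn_integral_mult_continuous_less_top:
  fixes g h :: "'a::metric_space \<Rightarrow> real"
  assumes sets: "sets M = sets borel" and g_meas: "g \<in> borel_measurable borel" and g_nonneg: "\<forall>x. g x \<ge> 0"
    and "continuous_on UNIV h" and "compact K"
    and fin: "(\<integral>\<^sup>+ x. ennreal (g x * indicator K x) \<partial>M) < \<infinity>"
  shows "(\<integral>\<^sup>+ x. ennreal (g x * h x * indicator K x) \<partial>M) < \<infinity>"
proof -
  obtain C where C: "\<forall>x\<in>K. norm (h x) \<le> C"
    using compact_imp_bounded[OF compact_continuous_image[OF continuous_on_subset[OF assms(4)] assms(5)]]
    by (auto simp: bounded_iff)
  have "(\<integral>\<^sup>+ x. ennreal (g x * h x * indicator K x) \<partial>M)
      \<le> (\<integral>\<^sup>+ x. ennreal C * ennreal (g x * indicator K x) \<partial>M)"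
  proof (intro nn_integral_mono)
    fix x
    show "ennreal (g x * h x * indicator K x) \<le> ennreal C * ennreal (g x * indicator K x)"
    proof (cases "x \<in> K")
      case True
      then have "h x \<le> C" using C by auto
      then have "g x * h x \<le> C * g x"
        using g_nonneg by (metis mult.commute mult_left_mono)
      moreover have "0 \<le> C" using C True by (meson norm_ge_zero order_trans)
      ultimately show ?thesis
        using True g_nonneg by (simp add: ennreal_mult[symmetric] ennreal_leI)
    qed simp
  qed
  also have "\<dots> = ennreal C * (\<integral>\<^sup>+ x. ennreal (g x * indicator K x) \<partial>M)"
    using compact_imp_closed[OF assms(5)] g_meas
    by (intro nn_integral_cmult) (simp add: measurable_cong_sets[OF sets refl])
  also have "\<dots> < \<infinity>" using fin by (simp add: ennreal_mult_less_top)
  finally show ?thesis .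
qed

lemma strongly_logconcave_density_affine:
  fixes \<nu> :: "'a::euclidean_space measure"
  assumes slc: "strongly_logconcave \<mu> N \<nu>" and sets: "sets \<nu> = sets borel"
    and X: "closed X" "emeasure \<nu> (- X) = 0" and pos: "\<forall>x\<in>X. \<alpha> + v \<bullet> x > 0"
  shows "strongly_logconcave \<mu> N (density \<nu> (\<lambda>x. ennreal (\<alpha> + v \<bullet> x)))"
proof -
  define l where "l x = max 0 (\<alpha> + v \<bullet> x)" for x
  have l_cont: "continuous_on UNIV l" unfolding l_def by (intro continuous_intros)
  have supp: "msupport (density \<nu> (\<lambda>x. ennreal (\<alpha> + v \<bullet> x))) = msupport \<nu>"
    using pos by (intro msupport_density[OF sets X]) (auto intro!: continuous_intros)
  define E where "E = affine hull (msupport \<nu>)"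
  define mE where "mE = lebesgue_on_affine E"
  obtain g :: "'a \<Rightarrow> real" where g_meas [measurable]: "g \<in> borel_measurable borel"
    and g_nonneg: "\<forall>x. g x \<ge> 0"
    and g_loc: "\<forall>K. compact K \<longrightarrow> (\<integral>\<^sup>+ x. ennreal (g x * indicator K x) \<partial>mE) < \<infinity>"
    and \<nu>_eq: "\<nu> = density mE (\<lambda>x. ennreal (g x))"
    and g_conv: "strongly_convex_on E \<mu> N (neglog g)"
    using slc unfolding strongly_logconcave_def Let_def E_def mE_def by blast
  have sets_mE: "sets mE = sets borel" by (simp add: mE_def)
  have "density \<nu> (\<lambda>x. ennreal (\<alpha> + v \<bullet> x)) = density mE (\<lambda>x. ennreal (g x) * ennreal (l x))"
    unfolding \<nu>_eq l_def ennreal_max_0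
    by (rule density_density_eq) (simp_all add: measurable_cong_sets[OF sets_mE refl])
  also have "\<dots> = density mE (\<lambda>x. ennreal (g x * l x))"
    using g_nonneg by (simp add: ennreal_mult l_def)
  finally have dens: "density \<nu> (\<lambda>x. ennreal (\<alpha> + v \<bullet> x)) = density mE (\<lambda>x. ennreal (g x * l x))" .
  have loc: "(\<integral>\<^sup>+ x. ennreal (g x * l x * indicator K x) \<partial>mE) < \<infinity>" if "compact K" for K
    using sets_mE g_meas g_nonneg l_cont \<open>compact K\<close> g_loc
    by (intro nn_integral_mult_continuous_less_top) auto
  have "neglog (\<lambda>x. g x * l x) = (\<lambda>x. neglog g x + neglog l x)"
    using g_nonneg by (intro ext neglog_mult) (auto simp: l_def)
  then have "strongly_convex_on E \<mu> N (neglog (\<lambda>x. g x * l x))"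
    using strongly_convex_on_add[OF g_conv convex_neglog_affine] unfolding l_def by simp
  then show ?thesis
    unfolding strongly_logconcave_def Let_def supp
    unfolding E_def[symmetric] mE_def[symmetric] dens
    using g_nonneg loc by (intro exI[of _ "\<lambda>x. g x * l x"]) (auto simp: l_def)
qed

lemma usc_on_bdd_above:
  assumes "usc_on X f" and "compact X"
  obtains M where "\<forall>x\<in>X. f x \<le> M"
proof -
  have "\<forall>x\<in>X. \<exists>d>0. \<forall>y\<in>X. dist y x < d \<longrightarrow> f y < f x + 1"
    using assms(1) unfolding usc_on_def by simp
  then obtain d where d: "\<forall>x\<in>X. d x > 0 \<and> (\<forall>y\<in>X. dist y x < d x \<longrightarrow> f y < f x + 1)"
    by metis
  obtain C where C: "C \<subseteq> X" "finite C" "X \<subseteq> (\<Union>c\<in>C. ball c (d c))"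
    using compactE_image[OF assms(2), of X "\<lambda>c. ball c (d c)"] d by force
  have "f y \<le> Max ((\<lambda>c. f c + 1) ` C)" if "y \<in> X" for y
  proof -
    obtain c where c: "c \<in> C" "y \<in> ball c (d c)" using C \<open>y \<in> X\<close> by auto
    then have "f y < f c + 1" using d C \<open>y \<in> X\<close> by (auto simp: dist_commute)
    also have "\<dots> \<le> Max ((\<lambda>c. f c + 1) ` C)" using C c by (intro Max_ge) auto
    finally show ?thesis by simp
  qed
  then show thesis using that by blast
qed

lemma borel_measurable_usc_on_indicator:
  fixes f :: "'a::metric_space \<Rightarrow> real"
  assumes "usc_on X f" and "closed X"
  shows "(\<lambda>x. f x * indicator X x) \<in> borel_measurable borel"
  unfolding borel_measurable_iff_less
proof
  fix a :: real
  define U where "U = \<Union>{ball x d | x d. d > 0 \<and> (\<forall>y\<in>X. dist y x < d \<longrightarrow> f y < a)}"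
  have "open U" unfolding U_def by blast
  have "X \<inter> {x. f x < a} = X \<inter> U"
  proof
    show "X \<inter> {x. f x < a} \<subseteq> X \<inter> U"
    proof
      fix x assume x: "x \<in> X \<inter> {x. f x < a}"
      then have "x \<in> X" "a - f x > 0" by auto
      then obtain d where "d > 0" "\<forall>y\<in>X. dist y x < d \<longrightarrow> f y < f x + (a - f x)"
        using assms(1) unfolding usc_on_def by blast
      then have "ball x d \<subseteq> U" unfolding U_def by auto
      then show "x \<in> X \<inter> U" using x \<open>d > 0\<close> by auto
    qed
    show "X \<inter> U \<subseteq> X \<inter> {x. f x < a}"
      unfolding U_def by (auto simp: dist_commute)
  qed
  then have "{x \<in> space borel. f x * indicator X x < a} = (X \<inter> U) \<union> (- X \<inter> {x. 0 < a})"
    by (auto simp: indicator_def)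
  also have "\<dots> \<in> sets borel"
    using assms(2) \<open>open U\<close> by (intro sets.Un sets.Int) (auto intro: borel_open)
  finally show "{x \<in> space borel. f x * indicator X x < a} \<in> sets borel" .
qed

lemma nn_integral_neg_le_iff:
  fixes F :: "'b \<Rightarrow> real"
  assumes "finite_measure M" and F_meas: "F \<in> borel_measurable M" and F_bdd: "\<forall>x. F x \<le> B"
  shows "(\<integral>\<^sup>+ x. ennreal (- F x) \<partial>M) \<le> (\<integral>\<^sup>+ x. ennreal (F x) \<partial>M)
     \<longleftrightarrow> integrable M F \<and> 0 \<le> integral\<^sup>L M F" (is "?neg \<le> ?pos \<longleftrightarrow> _")
proof -
  have "?pos \<le> (\<integral>\<^sup>+ x. ennreal B \<partial>M)"
    using F_bdd by (intro nn_integral_mono ennreal_leI) auto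
  also have "\<dots> < \<top>"
    using finite_measure.emeasure_finite[OF assms(1)] by (simp add: ennreal_mult_less_top top.not_eq_extremum)
  finally have pos_fin: "?pos < \<top>" .
  show ?thesis
  proof
    assume le: "?neg \<le> ?pos"
    then have "?neg < \<top>" using pos_fin by (rule le_less_trans)
    then have int: "integrable M F" unfolding real_integrable_def using F_meas pos_fin by auto
    have "enn2real ?neg \<le> enn2real ?pos" using le pos_fin by (intro enn2real_mono) auto
    with int show "integrable M F \<and> 0 \<le> integral\<^sup>L M F"
      by (simp add: real_lebesgue_integral_def)
  next
    assume int: "integrable M F \<and> 0 \<le> integral\<^sup>L M F"
    then have neg_fin: "?neg < \<top>" unfolding real_integrable_def by (simp add: top.not_eq_extremum)
    have "integral\<^sup>L M F = enn2real ?pos - enn2real ?neg"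
      using int real_lebesgue_integral_def by blast
    then have "enn2real ?neg \<le> enn2real ?pos" using int by linarith
    then show "?neg \<le> ?pos"
      using ennreal_leI ennreal_enn2real[OF neg_fin] ennreal_enn2real[OF pos_fin] by metis
  qed
qed

lemma integrable_continuous_on_compact:
  fixes h :: "'a::metric_space \<Rightarrow> 'b::{banach, second_countable_topology}"
  assumes "finite_measure M" and sets: "sets M = sets borel" and "compact X" and AE_X: "AE x in M. x \<in> X"
    and "h \<in> borel_measurable borel" and "continuous_on X h"
  shows "integrable M h"
proof -
  obtain B where "\<forall>x\<in>X. norm (h x) \<le> B"
    using compact_imp_bounded[OF compact_continuous_image[OF assms(6,3)]] by (auto simp: bounded_iff)
  with AE_X have "AE x in M. norm (h x) \<le> B" by (auto elim!: eventually_mono)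
  then show ?thesis
    using assms(5) by (intro finite_measure.integrable_const_bound[OF assms(1)])
      (simp_all add: measurable_cong_sets[OF sets refl])
qed

lemma integral_pos_continuous_on_compact:
  fixes h :: "'a::metric_space \<Rightarrow> real"
  assumes prob: "prob_space M" and sets: "sets M = sets borel" and "compact X" and AE_X: "AE x in M. x \<in> X"
    and "h \<in> borel_measurable borel" and "continuous_on X h" and pos: "\<forall>x\<in>X. h x > 0"
  shows "0 < integral\<^sup>L M h"
proof -
  have int: "integrable M h"
    using integrable_continuous_on_compact[OF prob_space.finite_measure[OF prob] sets assms(3) AE_X assms(5,6)] .
  have h_pos: "AE x in M. 0 < h x" using AE_X pos by (auto elim: eventually_mono)
  then have nonneg: "AE x in M. 0 \<le> h x" by eventually_elim simp
  have "integral\<^sup>L M h \<noteq> 0"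
  proof
    assume "integral\<^sup>L M h = 0"
    then have "AE x in M. h x = 0" using integral_nonneg_eq_0_iff_AE[OF int nonneg] by simp
    with h_pos have "AE x in M. False" by eventually_elim simp
    then show False using prob_space.AE_False[OF prob] by simp
  qed
  moreover have "0 \<le> integral\<^sup>L M h" using nonneg by (rule integral_nonneg_AE)
  ultimately show ?thesis by simp
qed

lemma emeasure_renorm_compl:
  assumes sets: "sets \<pi> = sets borel" and "(\<lambda>x. \<beta> x * indicator X x) \<in> borel_measurable borel"
    and "X \<in> sets borel"
  shows "emeasure (renorm X \<beta> \<pi>) (- X) = 0"
proof -
  define Z where "Z = (\<integral>x. \<beta> x * indicator X x \<partial>\<pi>)"
  have "emeasure (renorm X \<beta> \<pi>) (- X) = (\<integral>\<^sup>+ x. ennreal (\<beta> x * indicator X x / Z) * indicator (- X) x \<partial>\<pi>)"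
    unfolding renorm_def Let_def Z_def[symmetric] using assms
    by (intro emeasure_density) (auto simp: measurable_cong_sets[OF sets refl])
  also have "\<dots> = (\<integral>\<^sup>+ x. 0 \<partial>\<pi>)" by (intro nn_integral_cong) (simp split: split_indicator)
  finally show ?thesis by simp
qed

lemma renorm_density:
  fixes l :: "'a::euclidean_space \<Rightarrow> real"
  assumes sets: "sets \<pi> = sets borel" and b_meas: "(\<lambda>x. \<beta> x * indicator X x) \<in> borel_measurable borel"
    and \<beta>_nonneg: "\<forall>x\<in>X. 0 \<le> \<beta> x" and l_meas: "l \<in> borel_measurable borel" and l_nonneg: "\<forall>x\<in>X. 0 \<le> l x"
    and Z_pos: "0 < (\<integral>x. \<beta> x * indicator X x \<partial>\<pi>)"
  shows "renorm X \<beta> (density \<pi> (\<lambda>x. ennreal (l x)))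
    = density (renorm X \<beta> \<pi>) (\<lambda>x. ennreal ((\<integral>x. \<beta> x * indicator X x \<partial>\<pi>)
        / (\<integral>x. \<beta> x * indicator X x \<partial>density \<pi> (\<lambda>x. ennreal (l x))) * l x))"
proof -
  define b where "b x = \<beta> x * indicator X x" for x
  define Z where "Z = (\<integral>x. b x \<partial>\<pi>)"
  define Z1 where "Z1 = (\<integral>x. b x \<partial>density \<pi> (\<lambda>x. ennreal (l x)))"
  have meas: "h \<in> borel_measurable \<pi>" if "h \<in> borel_measurable borel" for h :: "'a \<Rightarrow> 'b::topological_space"
    using that by (simp add: measurable_cong_sets[OF sets refl])
  have b_meas' [measurable]: "b \<in> borel_measurable borel" using b_meas by (simp add: b_def[abs_def])
  note l_meas [measurable]
  have "renorm X \<beta> (density \<pi> (\<lambda>x. ennreal (l x)))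
      = density (density \<pi> (\<lambda>x. ennreal (l x))) (\<lambda>x. ennreal (b x / Z1))"
    unfolding renorm_def Let_def b_def Z1_def ..
  also have "\<dots> = density \<pi> (\<lambda>x. ennreal (l x) * ennreal (b x / Z1))"
    using l_meas b_meas' by (intro density_density_eq) (simp_all add: meas)
  also have "\<dots> = density \<pi> (\<lambda>x. ennreal (b x / Z) * ennreal (Z / Z1 * l x))"
  proof (intro arg_cong[where f = "density \<pi>"] ext)
    fix x
    show "ennreal (l x) * ennreal (b x / Z1) = ennreal (b x / Z) * ennreal (Z / Z1 * l x)"
    proof (cases "x \<in> X \<and> Z1 > 0")
      case True
      then have "0 \<le> l x" "0 \<le> b x" using l_nonneg \<beta>_nonneg by (simp_all add: b_def)
      then show ?thesis
        using True Z_pos by (simp add: ennreal_mult[symmetric] field_simps Z_def b_def)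
    next
      case False
      \<comment> \<open>If the tilted normaliser is not positive, ennreal clips both sides to 0.\<close>
      show ?thesis
      proof (cases "x \<in> X")
        case True
        with False have "Z1 \<le> 0" by simp
        moreover have "0 \<le> l x" "0 \<le> b x" using True l_nonneg \<beta>_nonneg by (simp_all add: b_def)
        moreover have "0 < Z" using Z_pos by (simp add: Z_def b_def)
        ultimately have "b x / Z1 \<le> 0" "Z / Z1 * l x \<le> 0"
          by (auto intro: divide_nonneg_nonpos mult_nonpos_nonneg)
        then show ?thesis by (simp add: ennreal_neg)
      qed (simp add: b_def)
    qed
  qed
  also have "\<dots> = density (renorm X \<beta> \<pi>) (\<lambda>x. ennreal (Z / Z1 * l x))"
    unfolding renorm_def Let_def b_def[symmetric] Z_def[symmetric]
    using l_meas b_meas' by (intro density_density_eq[symmetric]) (simp_all add: meas)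
  finally show ?thesis unfolding Z_def Z1_def b_def .
qed

lemma strongly_logconcave_renorm_density_affine:
  fixes \<pi> :: "'a::euclidean_space measure"
  assumes prob: "prob_space \<pi>" and sets: "sets \<pi> = sets borel"
    and X: "compact X" "emeasure \<pi> (- X) = 0"
    and \<beta>: "continuous_on X \<beta>" "\<forall>x\<in>X. \<beta> x > 0"
    and pos: "\<forall>x\<in>X. \<alpha> + v \<bullet> x > 0"
    and slc: "strongly_logconcave \<mu> N (renorm X \<beta> \<pi>)"
  shows "strongly_logconcave \<mu> N (renorm X \<beta> (density \<pi> (\<lambda>x. ennreal (\<alpha> + v \<bullet> x))))"
proof -
  define b where "b x = \<beta> x * indicator X x" for x
  define l where "l x = \<alpha> + v \<bullet> x" for x
  have X_sets [measurable]: "X \<in> sets borel" using X by (simp add: compact_imp_closed borel_closed)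
  have "(\<lambda>x. indicator X x *\<^sub>R \<beta> x) \<in> borel_measurable borel"
    using \<beta>(1) by (intro borel_measurable_continuous_on_indicator) auto
  then have b_meas [measurable]: "b \<in> borel_measurable borel"
    by (simp add: b_def[abs_def] mult.commute)
  have l_meas [measurable]: "l \<in> borel_measurable borel" unfolding l_def by measurable
  have AE_X: "AE x in \<pi>. x \<in> X" using X(2) sets by (intro AE_I[of _ _ "- X"]) auto
  have b_cont: "continuous_on X b" using \<beta>(1) by (rule continuous_on_eq) (simp add: b_def)
  have l_cont: "continuous_on X l" unfolding l_def by (intro continuous_intros)
  have b_pos: "\<forall>x\<in>X. 0 < b x" and l_pos: "\<forall>x\<in>X. 0 < l x"
    using \<beta>(2) pos by (simp_all add: b_def l_def)
  define Z where "Z = (\<integral>x. b x \<partial>\<pi>)"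
  define Z1 where "Z1 = (\<integral>x. b x \<partial>density \<pi> (\<lambda>x. ennreal (l x)))"
  have "Z > 0" unfolding Z_def by (rule integral_pos_continuous_on_compact[OF prob sets X(1) AE_X b_meas b_cont b_pos])
  have "AE x in \<pi>. 0 \<le> l x" using AE_X by eventually_elim (use l_pos in fastforce)
  then have "Z1 = (\<integral>x. l x * b x \<partial>\<pi>)"
    unfolding Z1_def by (subst integral_density) (auto simp: measurable_cong_sets[OF sets refl])
  also have "\<dots> > 0"
    using continuous_on_mult[OF l_cont b_cont] b_pos l_pos
    by (intro integral_pos_continuous_on_compact[OF prob sets X(1) AE_X]) auto
  finally have "Z1 > 0" .
  have "renorm X \<beta> (density \<pi> (\<lambda>x. ennreal (l x))) = density (renorm X \<beta> \<pi>) (\<lambda>x. ennreal (Z / Z1 * l x))"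
    unfolding Z_def Z1_def b_def using sets \<beta>(2) pos \<open>Z > 0\<close>
    by (intro renorm_density) (auto simp: b_def[symmetric] Z_def l_def less_imp_le)
  also have "(\<lambda>x. Z / Z1 * l x) = (\<lambda>x. Z / Z1 * \<alpha> + (Z / Z1) *\<^sub>R v \<bullet> x)"
    by (simp add: l_def algebra_simps)
  finally have eq: "renorm X \<beta> (density \<pi> (\<lambda>x. ennreal (\<alpha> + v \<bullet> x)))
      = density (renorm X \<beta> \<pi>) (\<lambda>x. ennreal (Z / Z1 * \<alpha> + (Z / Z1) *\<^sub>R v \<bullet> x))"
    by (simp add: l_def)
  have "\<forall>x\<in>X. Z / Z1 * \<alpha> + (Z / Z1) *\<^sub>R v \<bullet> x > 0"
  proof
    fix x assume "x \<in> X"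
    have "Z / Z1 * \<alpha> + (Z / Z1) *\<^sub>R v \<bullet> x = Z / Z1 * (\<alpha> + v \<bullet> x)" by (simp add: algebra_simps)
    also have "\<dots> > 0" using pos \<open>x \<in> X\<close> \<open>Z > 0\<close> \<open>Z1 > 0\<close> by simp
    finally show "Z / Z1 * \<alpha> + (Z / Z1) *\<^sub>R v \<bullet> x > 0" .
  qed
  moreover have "emeasure (renorm X \<beta> \<pi>) (- X) = 0"
    using sets b_meas by (intro emeasure_renorm_compl) (simp_all add: b_def[abs_def])
  ultimately show ?thesis
    unfolding eq using slc sets X(1)
    by (intro strongly_logconcave_density_affine) (auto simp: renorm_def Let_def compact_imp_closed)
qed

lemma integrable_scaleR_bounded:
  fixes F :: "'a \<Rightarrow> real" and g :: "'a \<Rightarrow> 'b::{banach, second_countable_topology}"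
  assumes "integrable M F" and "g \<in> borel_measurable M" and bnd: "AE x in M. norm (g x) \<le> B"
  shows "integrable M (\<lambda>x. F x *\<^sub>R g x)"
proof (rule Bochner_Integration.integrable_bound)
  show "integrable M (\<lambda>x. B * F x)" using assms(1) by simp
  show "(\<lambda>x. F x *\<^sub>R g x) \<in> borel_measurable M" using assms(1,2) by measurable
  show "AE x in M. norm (F x *\<^sub>R g x) \<le> norm (B * F x)"
    using bnd
  proof eventually_elim
    case (elim x)
    have "\<bar>F x\<bar> * norm (g x) \<le> \<bar>F x\<bar> * \<bar>B\<bar>" using elim by (intro mult_left_mono) auto
    then show ?case by (simp add: abs_mult mult.commute)
  qed
qed

lemma nn_integral_neg_le_density:
  fixes F l :: "'a \<Rightarrow> real"
  assumes fin: "finite_measure M" "finite_measure (density M (\<lambda>x. ennreal (l x)))"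
    and F_meas: "F \<in> borel_measurable M" and F_bdd: "\<forall>x. F x \<le> B"
    and l_meas: "l \<in> borel_measurable M" and l_bnd: "AE x in M. 0 \<le> l x \<and> l x \<le> C"
    and cond: "(\<integral>\<^sup>+ x. ennreal (- F x) \<partial>M) \<le> (\<integral>\<^sup>+ x. ennreal (F x) \<partial>M)"
    and mean: "0 \<le> (\<integral>x. l x * F x \<partial>M)"
  shows "(\<integral>\<^sup>+ x. ennreal (- F x) \<partial>density M l) \<le> (\<integral>\<^sup>+ x. ennreal (F x) \<partial>density M l)"
proof -
  have l_nonneg: "AE x in M. 0 \<le> l x" using l_bnd by eventually_elim simp
  have "integrable M F" using cond nn_integral_neg_le_iff[OF fin(1) F_meas F_bdd] by simp
  then have "integrable M (\<lambda>x. F x *\<^sub>R l x)"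
    using l_meas l_bnd by (intro integrable_scaleR_bounded[where B = C]) (auto elim: eventually_mono)
  then have "integrable (density M l) F"
    using F_meas l_meas l_nonneg by (simp add: integrable_density mult.commute)
  moreover have "integral\<^sup>L (density M l) F = (\<integral>x. l x * F x \<partial>M)"
    using F_meas l_meas l_nonneg by (simp add: integral_density)
  moreover have "F \<in> borel_measurable (density M l)" using F_meas by simp
  ultimately show ?thesis
    using mean nn_integral_neg_le_iff[OF fin(2) _ F_bdd] by simp
qed

lemma S_setD:
  fixes X :: "'a::euclidean_space set"
  assumes \<pi>: "\<pi> \<in> S_set X N \<mu> \<beta> f" and X: "compact X" and f: "usc_on X f"
  shows "prob_space \<pi>" and "sets \<pi> = sets borel" and "emeasure \<pi> (- X) = 0"
    and "AE x in \<pi>. x \<in> X"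
    and "integrable \<pi> (\<lambda>x. f x * indicator X x)" and "0 \<le> (\<integral>x. f x * indicator X x \<partial>\<pi>)"
proof -
  show prob: "prob_space \<pi>" and sets: "sets \<pi> = sets borel" and null: "emeasure \<pi> (- X) = 0"
    using \<pi> unfolding S_set_def by auto
  show "AE x in \<pi>. x \<in> X"
    using null sets X by (intro AE_I[of _ _ "- X"]) (auto simp: compact_imp_closed)
  obtain M where "\<forall>x\<in>X. f x \<le> M" using usc_on_bdd_above[OF f X] .
  then have "\<forall>x. f x * indicator X x \<le> max M 0" by (auto simp: indicator_def)
  moreover have "(\<lambda>x. f x * indicator X x) \<in> borel_measurable \<pi>"
    using borel_measurable_usc_on_indicator[OF f compact_imp_closed[OF X]]
    by (simp add: measurable_cong_sets[OF sets refl])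
  ultimately show "integrable \<pi> (\<lambda>x. f x * indicator X x)" "0 \<le> (\<integral>x. f x * indicator X x \<partial>\<pi>)"
    using \<pi> nn_integral_neg_le_iff[OF prob_space.finite_measure[OF prob]] unfolding S_set_def by auto
qed

lemma density_affine_in_S_set:
  fixes X :: "'a::euclidean_space set"
  assumes \<pi>: "\<pi> \<in> S_set X N \<mu> \<beta> f" and X: "compact X"
    and \<beta>: "continuous_on X \<beta>" "\<forall>x\<in>X. \<beta> x > 0" and f: "usc_on X f"
    and pos: "\<forall>x\<in>X. \<alpha> + v \<bullet> x > 0"
    and mass: "(\<integral>x. \<alpha> + v \<bullet> x \<partial>\<pi>) = 1"
    and f_mean: "0 \<le> (\<integral>x. (\<alpha> + v \<bullet> x) * (f x * indicator X x) \<partial>\<pi>)"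
  shows "density \<pi> (\<lambda>x. ennreal (\<alpha> + v \<bullet> x)) \<in> S_set X N \<mu> \<beta> f"
proof -
  note \<pi>_props = S_setD[OF \<pi> X f]
  have prob: "prob_space \<pi>" and sets: "sets \<pi> = sets borel" and null: "emeasure \<pi> (- X) = 0"
    and AE_X: "AE x in \<pi>. x \<in> X" using \<pi>_props by auto
  have slc: "strongly_logconcave \<mu> N \<pi>" "strongly_logconcave \<mu> N (renorm X \<beta> \<pi>)"
    and f_cond: "(\<integral>\<^sup>+ x. ennreal (- (f x * indicator X x)) \<partial>\<pi>) \<le> (\<integral>\<^sup>+ x. ennreal (f x * indicator X x) \<partial>\<pi>)"
    using \<pi> unfolding S_set_def by auto
  define l where "l x = \<alpha> + v \<bullet> x" for x
  define \<pi>1 where "\<pi>1 = density \<pi> (\<lambda>x. ennreal (l x))"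
  have fin: "finite_measure \<pi>" using prob by (rule prob_space.finite_measure)
  have meas: "h \<in> borel_measurable \<pi>" if "h \<in> borel_measurable borel" for h :: "'a \<Rightarrow> 'b::topological_space"
    using that by (simp add: measurable_cong_sets[OF sets refl])
  have l_meas [measurable]: "l \<in> borel_measurable borel" unfolding l_def by measurable
  have l_cont: "continuous_on X l" unfolding l_def by (intro continuous_intros)
  then obtain C where C: "\<forall>x\<in>X. norm (l x) \<le> C"
    using compact_imp_bounded[OF compact_continuous_image[OF _ X], of l] by (auto simp: bounded_iff)
  have l_bnd: "AE x in \<pi>. 0 \<le> l x \<and> l x \<le> C"
    using AE_X by eventually_elim (use pos C in \<open>force simp: l_def\<close>)
  have "emeasure \<pi>1 (space \<pi>1) = (\<integral>\<^sup>+ x. ennreal (l x) \<partial>\<pi>)"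
    unfolding \<pi>1_def by (simp add: emeasure_density meas nn_integral_density[symmetric])
  also have "\<dots> = ennreal (\<integral>x. l x \<partial>\<pi>)"
    using integrable_continuous_on_compact[OF fin sets X AE_X l_meas l_cont] l_bnd
    by (intro nn_integral_eq_integral) (auto elim: eventually_mono)
  finally have prob1: "prob_space \<pi>1" using mass by (intro prob_spaceI) (simp add: l_def)
  have null1: "emeasure \<pi>1 (- X) = 0"
    unfolding \<pi>1_def using null sets X
    by (subst emeasure_density) (auto simp: meas compact_imp_closed null_sets_def intro!: nn_integral_null_set)
  obtain M where "\<forall>x\<in>X. f x \<le> M" using usc_on_bdd_above[OF f X] .
  then have F_bdd: "\<forall>x. f x * indicator X x \<le> max M 0" by (auto simp: indicator_def)
  have f_cond1: "(\<integral>\<^sup>+ x. ennreal (- (f x * indicator X x)) \<partial>\<pi>1) \<le> (\<integral>\<^sup>+ x. ennreal (f x * indicator X x) \<partial>\<pi>1)"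
    unfolding \<pi>1_def
  proof (rule nn_integral_neg_le_density[where C = C, OF fin prob_space.finite_measure[OF prob1[unfolded \<pi>1_def]]])
    show "(\<lambda>x. f x * indicator X x) \<in> borel_measurable \<pi>"
      using borel_measurable_usc_on_indicator[OF f compact_imp_closed[OF X]] by (rule meas)
    show "0 \<le> (\<integral>x. l x * (f x * indicator X x) \<partial>\<pi>)" using f_mean by (simp add: l_def)
  qed (use F_bdd l_bnd f_cond in \<open>simp_all add: meas\<close>)
  have "strongly_logconcave \<mu> N \<pi>1"
    unfolding \<pi>1_def l_def
    by (rule strongly_logconcave_density_affine[OF slc(1) sets compact_imp_closed[OF X] null pos])
  moreover have "strongly_logconcave \<mu> N (renorm X \<beta> \<pi>1)"
    unfolding \<pi>1_def l_def
    by (rule strongly_logconcave_renorm_density_affine[OF prob sets X null \<beta> pos slc(2)])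
  ultimately show ?thesis
    using prob1 null1 f_cond1 sets unfolding S_set_def \<pi>1_def l_def by simp
qed

lemma centered_tilt_in_S_set:
  fixes X :: "'a::euclidean_space set"
  assumes \<pi>: "\<pi> \<in> S_set X N \<mu> \<beta> f" and X: "compact X"
    and \<beta>: "continuous_on X \<beta>" "\<forall>x\<in>X. \<beta> x > 0" and f: "usc_on X f"
    and m: "m = (\<integral>x. x \<partial>\<pi>)"
    and u_orth: "u \<bullet> (\<integral>x. (f x * indicator X x) *\<^sub>R (x - m) \<partial>\<pi>) = 0"
    and u_small: "\<forall>x\<in>X. \<bar>u \<bullet> (x - m)\<bar> < 1"
  shows "density \<pi> (\<lambda>x. ennreal (1 + u \<bullet> (x - m))) \<in> S_set X N \<mu> \<beta> f"
proof -
  note \<pi>_props = S_setD[OF \<pi> X f]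
  have prob: "prob_space \<pi>" and sets: "sets \<pi> = sets borel" and AE_X: "AE x in \<pi>. x \<in> X"
    and int_F: "integrable \<pi> (\<lambda>x. f x * indicator X x)" and F_mean: "0 \<le> (\<integral>x. f x * indicator X x \<partial>\<pi>)"
    using \<pi>_props by auto
  define F where "F x = f x * indicator X x" for x
  have fin: "finite_measure \<pi>" using prob by (rule prob_space.finite_measure)
  have int_id: "integrable \<pi> (\<lambda>x. x)"
    using integrable_continuous_on_compact[OF fin sets X AE_X _ continuous_on_id] by simp
  obtain R where R: "\<forall>x\<in>X. norm x \<le> R" using compact_imp_bounded[OF X] by (auto simp: bounded_iff)
  have "AE x in \<pi>. norm (x - m) \<le> R + norm m"
    using AE_X by eventually_elim (use R in \<open>auto intro: norm_triangle_le_diff\<close>)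
  then have int_Fx: "integrable \<pi> (\<lambda>x. F x *\<^sub>R (x - m))"
    using int_F sets unfolding F_def
    by (intro integrable_scaleR_bounded) (auto simp: measurable_cong_sets[OF sets refl])
  define \<alpha> where "\<alpha> = 1 - u \<bullet> m"
  have affine: "1 + u \<bullet> (x - m) = \<alpha> + u \<bullet> x" for x
    by (simp add: \<alpha>_def inner_diff_right)
  have "(\<integral>x. \<alpha> + u \<bullet> x \<partial>\<pi>) = (\<integral>x. \<alpha> \<partial>\<pi>) + (\<integral>x. u \<bullet> x \<partial>\<pi>)"
    using int_id by (intro Bochner_Integration.integral_add integrable_inner_right)
      (simp_all add: finite_measure.integrable_const[OF fin])
  also have "\<dots> = 1"
    using int_id by (simp add: m \<alpha>_def prob_space.prob_space[OF prob] integral_inner_right)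
  finally have mass: "(\<integral>x. \<alpha> + u \<bullet> x \<partial>\<pi>) = 1" .
  have "(\<integral>x. (\<alpha> + u \<bullet> x) * F x \<partial>\<pi>) = (\<integral>x. F x + u \<bullet> (F x *\<^sub>R (x - m)) \<partial>\<pi>)"
    by (intro Bochner_Integration.integral_cong) (simp_all add: affine[symmetric] algebra_simps)
  also have "\<dots> = integral\<^sup>L \<pi> F + (\<integral>x. u \<bullet> (F x *\<^sub>R (x - m)) \<partial>\<pi>)"
    using int_F by (intro Bochner_Integration.integral_add integrable_inner_right int_Fx) (simp add: F_def)
  also have "\<dots> = integral\<^sup>L \<pi> F"
    unfolding integral_inner_right[OF int_Fx] using u_orth by (simp add: F_def)
  finally have f_mean: "0 \<le> (\<integral>x. (\<alpha> + u \<bullet> x) * (f x * indicator X x) \<partial>\<pi>)"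
    using F_mean by (simp add: F_def[abs_def])
  have "\<forall>x\<in>X. \<alpha> + u \<bullet> x > 0" using u_small by (auto simp: affine[symmetric])
  then show ?thesis
    unfolding affine using density_affine_in_S_set[OF \<pi> X \<beta> f _ mass f_mean] by blast
qed

lemma emeasure_weighted_sum_measure:
  fixes p :: "nat \<Rightarrow> 'a::topological_space measure"
  assumes sets: "\<forall>i<n. sets (p i) = sets borel" and A: "A \<in> sets borel"
  shows "emeasure (measure_of UNIV (sets borel) (\<lambda>A. \<Sum>i<n. r i * emeasure (p i) A)) A
       = (\<Sum>i<n. r i * emeasure (p i) A)"
proof (rule emeasure_measure_of_sigma)
  show "sigma_algebra UNIV (sets borel)"
    by (metis sets.sigma_algebra_axioms space_borel)
  show "positive (sets borel) (\<lambda>A. \<Sum>i<n. r i * emeasure (p i) A)"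
    unfolding positive_def by simp
  show "countably_additive (sets borel) (\<lambda>A. \<Sum>i<n. r i * emeasure (p i) A)"
  proof (rule countably_additiveI)
    fix B :: "nat \<Rightarrow> 'a set" assume B: "range B \<subseteq> sets borel" "disjoint_family B"
    have "(\<Sum>k. \<Sum>i<n. r i * emeasure (p i) (B k)) = (\<Sum>i<n. \<Sum>k. r i * emeasure (p i) (B k))"
      by (rule suminf_sum) simp
    also have "\<dots> = (\<Sum>i<n. r i * emeasure (p i) (\<Union>k. B k))"
    proof (rule sum.cong[OF refl])
      fix i assume "i \<in> {..<n}"
      then have "range B \<subseteq> sets (p i)" using sets B by auto
      then show "(\<Sum>k. r i * emeasure (p i) (B k)) = r i * emeasure (p i) (\<Union>k. B k)"
        using B by (simp add: suminf_emeasure)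
    qed
    finally show "(\<Sum>k. \<Sum>i<n. r i * emeasure (p i) (B k)) = (\<Sum>i<n. r i * emeasure (p i) (\<Union>k. B k))" .
  qed
qed (rule A)

lemma in_conv_meas:
  assumes "q \<in> S" and "sets q = sets borel"
  shows "q \<in> conv_meas S"
  unfolding conv_meas_def
  using assms by (intro CollectI conjI exI[of _ "1::nat"] exI[of _ "\<lambda>_. 1::real"] exI[of _ "\<lambda>_. q"]) auto

lemma conv_meas_obtain_split:
  fixes S :: "'a::topological_space measure set"
  assumes "\<nu> \<in> conv_meas S" and S_sets: "\<forall>q\<in>S. sets q = sets borel"
  obtains q \<nu>' t where "q \<in> S" and "\<nu>' \<in> conv_meas S" and "0 < t" and "t < 1"
    and "\<forall>A\<in>sets borel. emeasure \<nu> A = ennreal t * emeasure q A + ennreal (1 - t) * emeasure \<nu>' A"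
proof -
  obtain n :: nat and c :: "nat \<Rightarrow> real" and p :: "nat \<Rightarrow> 'a measure"
    where pc: "\<forall>i<n. p i \<in> S \<and> c i \<ge> 0" and c_sum: "(\<Sum>i<n. c i) = 1"
      and \<nu>_eq: "\<forall>A\<in>sets borel. emeasure \<nu> A = (\<Sum>i<n. ennreal (c i) * emeasure (p i) A)"
    using assms(1) unfolding conv_meas_def by blast
  have p_sets: "\<forall>i<n. sets (p i) = sets borel" using pc S_sets by auto
  have "\<exists>j<n. c j > 0"
  proof (rule ccontr)
    assume "\<not> (\<exists>j<n. c j > 0)"
    then have "\<forall>i<n. c i = 0" using pc by force
    then show False using c_sum by simp
  qed
  then obtain j where j: "j < n" "c j > 0" by blast
  have "c j \<le> (\<Sum>i<n. c i)" using j pc by (intro member_le_sum) auto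
  then have "c j \<le> 1" using c_sum by simp
  \<comment> \<open>Splitting off only half of the weight of \<open>p j\<close> keeps \<open>t < 1\<close> even when \<open>c j = 1\<close>.\<close>
  define t where "t = c j / 2"
  have t: "0 < t" "t < 1" using j \<open>c j \<le> 1\<close> by (auto simp: t_def)
  define \<delta> where "\<delta> i = (if i = j then t else 0)" for i
  define c' where "c' i = (c i - \<delta> i) / (1 - t)" for i
  have c'_nonneg: "\<forall>i<n. c' i \<ge> 0" using pc t by (auto simp: c'_def \<delta>_def t_def)
  have "(\<Sum>i<n. c' i) = ((\<Sum>i<n. c i) - (\<Sum>i<n. \<delta> i)) / (1 - t)"
    by (simp add: c'_def sum_divide_distrib[symmetric] sum_subtractf)
  then have c'_sum: "(\<Sum>i<n. c' i) = 1" using c_sum j t by (simp add: \<delta>_def)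
  define \<nu>' where "\<nu>' = measure_of UNIV (sets borel) (\<lambda>A. \<Sum>i<n. ennreal (c' i) * emeasure (p i) A)"
  have \<nu>'_eq: "emeasure \<nu>' A = (\<Sum>i<n. ennreal (c' i) * emeasure (p i) A)" if "A \<in> sets borel" for A
    unfolding \<nu>'_def using p_sets that by (rule emeasure_weighted_sum_measure)
  have "sets \<nu>' = sets borel" unfolding \<nu>'_def
    by (metis sets.sigma_algebra_axioms sigma_algebra.sets_measure_of_eq space_borel)
  then have "\<nu>' \<in> conv_meas S"
    unfolding conv_meas_def using pc c'_nonneg c'_sum \<nu>'_eq by blast
  moreover have "emeasure \<nu> A = ennreal t * emeasure (p j) A + ennreal (1 - t) * emeasure \<nu>' A"
    if A: "A \<in> sets borel" for A
  proof -
    have "ennreal (1 - t) * ennreal (c' i) = ennreal (c i - \<delta> i)" if "i < n" for i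
      using c'_nonneg that t by (simp add: ennreal_mult[symmetric] c'_def)
    then have "ennreal (1 - t) * emeasure \<nu>' A = (\<Sum>i<n. ennreal (c i - \<delta> i) * emeasure (p i) A)"
      by (simp add: \<nu>'_eq[OF A] sum_distrib_left mult.assoc[symmetric])
    moreover have "(\<Sum>i<n. ennreal (\<delta> i) * emeasure (p i) A)
        = (\<Sum>i<n. if i = j then ennreal t * emeasure (p j) A else 0)"
      by (intro sum.cong) (auto simp: \<delta>_def)
    then have "ennreal t * emeasure (p j) A = (\<Sum>i<n. ennreal (\<delta> i) * emeasure (p i) A)"
      using j by simp
    moreover have "ennreal (c i - \<delta> i) + ennreal (\<delta> i) = ennreal (c i)" if "i < n" for i
      using pc that j by (simp add: \<delta>_def t_def ennreal_plus[symmetric] del: ennreal_plus)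
    ultimately show ?thesis
      using \<nu>_eq A by (simp add: sum.distrib[symmetric] distrib_right[symmetric] add.commute)
  qed
  ultimately show thesis using that pc j t by blast
qed

lemma extreme_meas_conv_meas_mem:
  fixes S :: "'a::topological_space measure set"
  assumes ext: "extreme_meas (conv_meas S) \<pi>" and S_sets: "\<forall>q\<in>S. sets q = sets borel"
  shows "\<pi> \<in> S"
proof -
  have "\<pi> \<in> conv_meas S" using ext by (simp add: extreme_meas_def)
  then have sets: "sets \<pi> = sets borel" by (simp add: conv_meas_def)
  obtain q \<nu> t where "q \<in> S" "\<nu> \<in> conv_meas S" "0 < t" "t < 1"
    and split: "\<forall>A\<in>sets borel. emeasure \<pi> A = ennreal t * emeasure q A + ennreal (1 - t) * emeasure \<nu> A"
    using conv_meas_obtain_split[OF \<open>\<pi> \<in> conv_meas S\<close> S_sets] by blast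
  moreover have "q \<in> conv_meas S" using \<open>q \<in> S\<close> S_sets by (simp add: in_conv_meas)
  ultimately have "q = \<nu>" using ext unfolding extreme_meas_def by blast
  have "\<pi> = q"
  proof (rule measure_eqI)
    show "sets \<pi> = sets q" using sets S_sets \<open>q \<in> S\<close> by simp
    fix A assume "A \<in> sets \<pi>"
    then have "emeasure \<pi> A = (ennreal t + ennreal (1 - t)) * emeasure q A"
      using split sets \<open>q = \<nu>\<close> by (simp add: distrib_right)
    then show "emeasure \<pi> A = emeasure q A"
      using \<open>t < 1\<close> \<open>0 < t\<close> by (simp add: ennreal_plus[symmetric] del: ennreal_plus)
  qed
  then show ?thesis using \<open>q \<in> S\<close> by simp
qed

lemma not_collinear_obtains_orthogonal:
  fixes K :: "'a::euclidean_space set"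
  assumes "\<not> collinear K"
  obtains p u where "p \<in> K" "u \<bullet> w = 0" "u \<bullet> (p - m) \<noteq> 0"
proof -
  have "\<exists>p\<in>K. \<exists>u. u \<bullet> w = 0 \<and> u \<bullet> (p - m) \<noteq> 0"
  proof (rule ccontr)
    assume "\<not> ?thesis"
    then have orth: "\<forall>p\<in>K. \<forall>u. u \<bullet> w = 0 \<longrightarrow> u \<bullet> (p - m) = 0" by blast
    have "p = m + ((p - m) \<bullet> w / (w \<bullet> w)) *\<^sub>R w" if "p \<in> K" for p
    proof -
      define d where "d = p - m"
      define u where "u = d - (d \<bullet> w / (w \<bullet> w)) *\<^sub>R w"
      have "u \<bullet> w = 0" by (cases "w = 0") (simp_all add: u_def inner_diff_left)
      then have "u \<bullet> d = 0" using orth that by (simp add: d_def)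
      moreover have "u \<bullet> d = u \<bullet> u"
        using \<open>u \<bullet> w = 0\<close> by (simp add: u_def inner_diff_right inner_diff_left inner_commute)
      ultimately have "u = 0" by simp
      then show ?thesis by (simp add: u_def d_def)
    qed
    then have "collinear K" unfolding collinear_alt by blast
    with assms show False by contradiction
  qed
  with that show thesis by blast
qed

lemma emeasure_convex_combination_density:
  fixes l1 l2 :: "'b \<Rightarrow> real"
  assumes A: "A \<in> sets M" and meas: "l1 \<in> borel_measurable M" "l2 \<in> borel_measurable M"
    and t: "0 \<le> t" "t \<le> 1"
    and comb: "AE x in M. 0 \<le> l1 x \<and> 0 \<le> l2 x \<and> t * l1 x + (1 - t) * l2 x = 1"
  shows "emeasure M A = ennreal t * emeasure (density M l1) A + ennreal (1 - t) * emeasure (density M l2) A"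
proof -
  have "ennreal t * emeasure (density M l1) A + ennreal (1 - t) * emeasure (density M l2) A
      = (\<integral>\<^sup>+ x. ennreal t * (ennreal (l1 x) * indicator A x) \<partial>M)
        + (\<integral>\<^sup>+ x. ennreal (1 - t) * (ennreal (l2 x) * indicator A x) \<partial>M)"
    using A meas by (simp add: emeasure_density nn_integral_cmult)
  also have "\<dots> = (\<integral>\<^sup>+ x. ennreal t * (ennreal (l1 x) * indicator A x)
        + ennreal (1 - t) * (ennreal (l2 x) * indicator A x) \<partial>M)"
    using A meas by (intro nn_integral_add[symmetric]) auto
  also have "\<dots> = (\<integral>\<^sup>+ x. indicator A x \<partial>M)"
    using comb
  proof (intro nn_integral_cong_AE, eventually_elim)
    case (elim x)
    then have "ennreal t * ennreal (l1 x) + ennreal (1 - t) * ennreal (l2 x) = 1"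
      using t by (simp add: ennreal_mult[symmetric] ennreal_plus[symmetric] del: ennreal_plus)
    then show ?case by (simp add: mult.assoc[symmetric] distrib_right[symmetric])
  qed
  also have "\<dots> = emeasure M A" using A by simp
  finally show ?thesis ..
qed

lemma extreme_meas_S_set_orthogonal:
  fixes X :: "'a::euclidean_space set"
  assumes X: "compact X" and \<beta>: "continuous_on X \<beta>" "\<forall>x\<in>X. \<beta> x > 0" and f: "usc_on X f"
    and ext: "extreme_meas (conv_meas (S_set X N \<mu> \<beta> f)) \<pi>"
    and m: "m = (\<integral>x. x \<partial>\<pi>)"
    and v_orth: "v \<bullet> (\<integral>x. (f x * indicator X x) *\<^sub>R (x - m) \<partial>\<pi>) = 0"
    and v_small: "\<forall>x\<in>X. \<bar>v \<bullet> (x - m)\<bar> < 1"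
    and p: "p \<in> msupport \<pi>"
  shows "v \<bullet> (p - m) = 0"
proof -
  have S_sets: "\<forall>q\<in>S_set X N \<mu> \<beta> f. sets q = sets borel" by (simp add: S_set_def)
  have \<pi>: "\<pi> \<in> S_set X N \<mu> \<beta> f" using extreme_meas_conv_meas_mem[OF ext S_sets] .
  note \<pi>_props = S_setD[OF \<pi> X f]
  have prob: "prob_space \<pi>" and sets: "sets \<pi> = sets borel" and null: "emeasure \<pi> (- X) = 0"
    and AE_X: "AE x in \<pi>. x \<in> X" using \<pi>_props by auto
  have "p \<in> X" using p msupport_subset[OF sets compact_imp_closed[OF X] null] by blast
  define \<pi>1 where "\<pi>1 = density \<pi> (\<lambda>x. ennreal (1 + v \<bullet> (x - m)))"
  define \<pi>2 where "\<pi>2 = density \<pi> (\<lambda>x. ennreal (1 + (- v) \<bullet> (x - m)))"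
  have tilt: "density \<pi> (\<lambda>x. ennreal (1 + v' \<bullet> (x - m))) \<in> S_set X N \<mu> \<beta> f"
    if "v' = v \<or> v' = - v" for v'
    using that v_orth v_small by (intro centered_tilt_in_S_set[OF \<pi> X \<beta> f m]) auto
  have "\<pi>1 \<in> S_set X N \<mu> \<beta> f" "\<pi>2 \<in> S_set X N \<mu> \<beta> f"
    unfolding \<pi>1_def \<pi>2_def by (rule tilt; simp)+
  then have "\<pi>1 \<in> conv_meas (S_set X N \<mu> \<beta> f)" "\<pi>2 \<in> conv_meas (S_set X N \<mu> \<beta> f)"
    using S_sets by (auto intro: in_conv_meas)
  moreover have "emeasure \<pi> A = ennreal (1 / 2) * emeasure \<pi>1 A + ennreal (1 - 1 / 2) * emeasure \<pi>2 A"
    if "A \<in> sets borel" for A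
    unfolding \<pi>1_def \<pi>2_def
  proof (rule emeasure_convex_combination_density)
    show "AE x in \<pi>. 0 \<le> 1 + v \<bullet> (x - m) \<and> 0 \<le> 1 + - v \<bullet> (x - m)
        \<and> 1 / 2 * (1 + v \<bullet> (x - m)) + (1 - 1 / 2) * (1 + - v \<bullet> (x - m)) = 1"
      using AE_X
    proof eventually_elim
      case (elim x)
      then have "\<bar>v \<bullet> (x - m)\<bar> < 1" using v_small by blast
      then show ?case by (simp add: abs_less_iff field_simps)
    qed
  qed (use that sets in \<open>auto simp: measurable_cong_sets[OF sets refl]\<close>)
  moreover have "(1 / 2 :: real) > 0" "(1 / 2 :: real) < 1" by simp_all
  ultimately have "\<pi>1 = \<pi>2" using ext unfolding extreme_meas_def by blast
  have "1 + v \<bullet> (p - m) = 1 + (- v) \<bullet> (p - m)"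
  proof (rule density_eq_imp_eq_on_msupport[OF sets _ p])
    show "emeasure \<pi> (space \<pi>) < \<infinity>" using prob_space.emeasure_space_1[OF prob] by simp
    show "0 \<le> 1 + v \<bullet> (p - m)" "0 \<le> 1 + (- v) \<bullet> (p - m)"
      using v_small \<open>p \<in> X\<close> by (auto simp: abs_less_iff)
    show "(\<lambda>x. 1 + v \<bullet> (x - m)) \<in> borel_measurable borel"
      "(\<lambda>x. 1 + (- v) \<bullet> (x - m)) \<in> borel_measurable borel" by measurable
    show "isCont (\<lambda>x. 1 + v \<bullet> (x - m)) p" "isCont (\<lambda>x. 1 + (- v) \<bullet> (x - m)) p"
      by (intro continuous_intros)+
    show "density \<pi> (\<lambda>x. ennreal (1 + v \<bullet> (x - m))) = density \<pi> (\<lambda>x. ennreal (1 + (- v) \<bullet> (x - m)))"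
      using \<open>\<pi>1 = \<pi>2\<close> by (simp only: \<pi>1_def \<pi>2_def)
  qed
  then show ?thesis by simp
qed

lemma extreme_meas_S_set_collinear_msupport:
  fixes X :: "'a::euclidean_space set"
  assumes X: "compact X" and \<beta>: "continuous_on X \<beta>" "\<forall>x\<in>X. \<beta> x > 0" and f: "usc_on X f"
    and ext: "extreme_meas (conv_meas (S_set X N \<mu> \<beta> f)) \<pi>"
  shows "collinear (msupport \<pi>)"
proof (rule ccontr)
  define m where "m = (\<integral>x. x \<partial>\<pi>)"
  define w where "w = (\<integral>x. (f x * indicator X x) *\<^sub>R (x - m) \<partial>\<pi>)"
  assume "\<not> collinear (msupport \<pi>)"
  then obtain p u where p: "p \<in> msupport \<pi>" and "u \<bullet> w = 0" and "u \<bullet> (p - m) \<noteq> 0"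
    by (rule not_collinear_obtains_orthogonal)
  obtain R where R: "\<forall>x\<in>X. norm x \<le> R" "R \<ge> 0"
    using compact_imp_bounded[OF X] by (metis bounded_pos less_imp_le)
  define \<epsilon> where "\<epsilon> = 1 / (norm u * (R + norm m) + 1)"
  have "0 \<le> norm u * (R + norm m)" using R by simp
  then have "\<epsilon> > 0" by (simp add: \<epsilon>_def)
  have "\<bar>(\<epsilon> *\<^sub>R u) \<bullet> (x - m)\<bar> < 1" if "x \<in> X" for x
  proof -
    have "\<bar>u \<bullet> (x - m)\<bar> \<le> norm u * norm (x - m)" by (rule Cauchy_Schwarz_ineq2)
    also have "\<dots> \<le> norm u * (R + norm m)"
      using R that by (intro mult_left_mono) (auto intro: norm_triangle_le_diff)
    also have "\<dots> < 1 / \<epsilon>" using \<open>0 \<le> norm u * (R + norm m)\<close> by (simp add: \<epsilon>_def)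
    finally show ?thesis using \<open>\<epsilon> > 0\<close> by (simp add: abs_mult field_simps)
  qed
  then have "(\<epsilon> *\<^sub>R u) \<bullet> (p - m) = 0"
    using \<open>u \<bullet> w = 0\<close> p by (intro extreme_meas_S_set_orthogonal[OF X \<beta> f ext m_def]) (auto simp: w_def)
  then show False using \<open>\<epsilon> > 0\<close> \<open>u \<bullet> (p - m) \<noteq> 0\<close> by simp
qed

lemma collinear_subset_closed_segment:
  fixes X K :: "'a::euclidean_space set"
  assumes "compact X" and "convex X" and "K \<subseteq> X" and "K \<noteq> {}" and "collinear K"
  obtains a b where "closed_segment a b \<subseteq> X" and "K \<subseteq> closed_segment a b"
proof -
  define T where "T = X \<inter> affine hull K"
  have "K \<subseteq> T" using assms(3) by (auto simp: T_def hull_subset[THEN subsetD])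
  have "T \<noteq> {}" using assms(4) \<open>K \<subseteq> T\<close> by blast
  moreover have "compact T" using assms(1) unfolding T_def by (intro compact_Int_closed) auto
  moreover have "convex T"
    unfolding T_def by (rule convex_Int[OF assms(2) affine_imp_convex[OF affine_affine_hull]])
  moreover have "collinear T"
    using assms(5) collinear_subset[of "affine hull K" T] unfolding T_def
    by (simp add: collinear_affine_hull_collinear)
  ultimately obtain a b where "T = closed_segment a b"
    by (rule compact_convex_collinear_segment)
  moreover have "T \<subseteq> X" by (simp add: T_def)
  ultimately show thesis using that \<open>K \<subseteq> T\<close> by blast
qed

theorem lemma3p2:
  fixes X :: "'a::euclidean_space set" and N :: "'a \<Rightarrow> real" and \<mu> :: real
    and \<beta> :: "'a \<Rightarrow> real" and f :: "'a \<Rightarrow> real" and \<pi> :: "'a measure"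
  assumes "compact X" and "convex X" and "is_norm N" and "\<mu> > 0"
    and "continuous_on X \<beta>" and "\<forall>x\<in>X. \<beta> x > 0"
    and "usc_on X f"
    and "extreme_meas (conv_meas (S_set X N \<mu> \<beta> f)) \<pi>"
  shows "(\<exists>x\<in>X. \<pi> = return borel x \<and> f x \<ge> 0)
       \<or> (\<exists>a b. closed_segment a b \<subseteq> X \<and> emeasure \<pi> (- closed_segment a b) = 0)"
proof -
  have "\<pi> \<in> S_set X N \<mu> \<beta> f"
    by (rule extreme_meas_conv_meas_mem[OF assms(8)]) (simp add: S_set_def)
  then have prob: "prob_space \<pi>" and sets: "sets \<pi> = sets borel" and null: "emeasure \<pi> (- X) = 0"
    unfolding S_set_def by auto
  have supp_null: "- msupport \<pi> \<in> null_sets \<pi>" using sets by (rule compl_msupport_null)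
  have "msupport \<pi> \<noteq> {}"
    using null_setsD1[OF supp_null] prob_space.emeasure_space_1[OF prob] sets_eq_imp_space_eq[OF sets]
    by auto
  moreover have "msupport \<pi> \<subseteq> X"
    using msupport_subset[OF sets compact_imp_closed null] assms(1) .
  moreover have "collinear (msupport \<pi>)"
    using assms(1,5,6,7,8) by (rule extreme_meas_S_set_collinear_msupport)
  ultimately obtain a b where seg: "closed_segment a b \<subseteq> X" "msupport \<pi> \<subseteq> closed_segment a b"
    using collinear_subset_closed_segment[OF assms(1,2)] by metis
  have "- closed_segment a b \<in> sets \<pi>" unfolding sets by (intro borel_open open_Compl closed_segment)
  then have "- closed_segment a b \<in> null_sets \<pi>"
    using null_sets_subset[OF supp_null] seg(2) by blast
  then show ?thesis using seg(1) null_setsD1 by blast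
qed

end
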